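(* Let $\gamma$ be an arc-length parametrized curve in a $2$-dimensional real space form $M^2(G)$ with curvature $k$, and let $(T_{\mathcal{P},\gamma}(\Lambda_G),[\cdot,\cdot]_\gamma)$ and $\mathrm{der}^*(\mathcal{P})$ be as below. The map $\Phi_\gamma:T_{\mathcal{P},\gamma}(\Lambda_G)\to\mathrm{der}^*(\mathcal{P})$, $\Phi_\gamma(\mathbf{V})=\partial_{\mathbf{V}(k)}$, is a homomorphism of Lie algebras.
   Context: $\mathcal{P}=\mathbb{R}[k^{(m)}:m\in\mathbb{N}]$ (polynomials in $k$ and its arc-length derivatives), $\mathcal{P}_0$ those with zero constant term. For $a\in\mathcal{P}$, $\partial_a=\sum_{m\ge0}a^{(m)}\frac{\partial}{\partial k^{(m)}}$ is a derivation of $\mathcal{P}$; $\mathrm{der}^*(\mathcal{P})=\{\partial_a:a\in\mathcal{P}\}$ is a Lie algebra under the commutator, with $[\partial_a,\partial_b]=\partial_{\partial_ab-\partial_ba}$. Frenet frame $\{\mathbf{T},\mathbf{N}\}$ with $\nabla_{\mathbf{T}}\mathbf{T}=k\mathbf{N}$, $\nabla_{\mathbf{T}}\mathbf{N}=-k\mathbf{T}$. $T_{\mathcal{P},\gamma}(\Lambda_G)=\{\mathbf{V}=f\mathbf{T}+g\mathbf{N}: f,g\in\mathcal{P},\ f\in\mathcal{P}_0,\ f'=kg\}$. For $\mathbf{V}=f\mathbf{T}+g\mathbf{N}$ with $f,g\in\mathcal{P}$ put $\rho_{\mathbf{V}}=f'-kg$, $\varphi_{\mathbf{V}}=g'+kf$;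 $\mathbf{V}$ acts on $\mathcal{P}$ as the derivation with $\mathbf{V}(k)=\varphi_{\mathbf{V}}'-k\rho_{\mathbf{V}}+Gg$ and $\mathbf{V}(h')=\mathbf{V}(h)'+\rho_{\mathbf{V}}h'$ (so for $\mathbf{V}\in T_{\mathcal{P},\gamma}(\Lambda_G)$, $\mathbf{V}(k)=\varphi_{\mathbf{V}}'+Gg$). Define $D_{\mathbf{V}}\mathbf{W}=(\mathbf{V}(f_{\mathbf{W}})-g_{\mathbf{W}}\varphi_{\mathbf{V}})\mathbf{T}+(\mathbf{V}(g_{\mathbf{W}})+f_{\mathbf{W}}\varphi_{\mathbf{V}})\mathbf{N}$ for $\mathbf{W}=f_{\mathbf{W}}\mathbf{T}+g_{\mathbf{W}}\mathbf{N}$, and the Lie bracket $[\mathbf{V},\mathbf{W}]_\gamma=D_{\mathbf{V}}\mathbf{W}-D_{\mathbf{W}}\mathbf{V}$, under which $T_{\mathcal{P},\gamma}(\Lambda_G)$ is a Lie algebra. *)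

theory Defs
  imports Complex_Main "HOL-Library.Poly_Mapping"
begin

text \<open>The differential polynomial algebra P = R[k^(m) : m in N]: polynomials in the
countably many variables k^(0) = k, k^(1) = k', ...; a monomial is a finitely
supported exponent vector nat =>0 nat, a polynomial a finitely supported real
coefficient function on monomials (the standard multivariate polynomial encoding).\<close>

type_synonym dpoly = "(nat \<Rightarrow>\<^sub>0 nat) \<Rightarrow>\<^sub>0 real"

definition const :: "real \<Rightarrow> dpoly" where
  "const c = Poly_Mapping.single 0 c"

definition kvar :: "nat \<Rightarrow> dpoly" where
  "kvar m = Poly_Mapping.single (Poly_Mapping.single m 1) 1"

definition kk :: dpoly where
  "kk = kvar 0"

definition vars :: "dpoly \<Rightarrow> nat set" where
  "vars p = (\<Union>mon\<in>Poly_Mapping.keys p. Poly_Mapping.keys mon)"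

definition pdv :: "nat \<Rightarrow> dpoly \<Rightarrow> dpoly" where
  "pdv i p = (\<Sum>mon\<in>Poly_Mapping.keys p.
      Poly_Mapping.single (mon - Poly_Mapping.single i 1)
        (Poly_Mapping.lookup p mon * of_nat (Poly_Mapping.lookup mon i)))"

definition derivation_of :: "(nat \<Rightarrow> dpoly) \<Rightarrow> dpoly \<Rightarrow> dpoly" where
  "derivation_of e p = (\<Sum>i\<in>vars p. e i * pdv i p)"

text \<open>arc-length derivative h \<mapsto> h' (k^(m) \<mapsto> k^(m+1))\<close>
definition dd :: "dpoly \<Rightarrow> dpoly" where
  "dd = derivation_of (\<lambda>i. kvar (Suc i))"

definition pa :: "dpoly \<Rightarrow> dpoly \<Rightarrow> dpoly" where
  "pa a = derivation_of (\<lambda>m. (dd ^^ m) a)"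

text \<open>vector fields V = f T + g N are represented as the pair (f, g)\<close>
type_synonym vfield = "dpoly \<times> dpoly"

definition rho :: "vfield \<Rightarrow> dpoly" where
  "rho V = dd (fst V) - kk * snd V"

definition phi :: "vfield \<Rightarrow> dpoly" where
  "phi V = dd (snd V) + kk * fst V"

text \<open>V(k^(m)): V(k) = phi' - k rho + G g, V(h') = V(h)' + rho h'\<close>
fun Vk :: "real \<Rightarrow> vfield \<Rightarrow> nat \<Rightarrow> dpoly" where
  "Vk G V 0 = dd (phi V) - kk * rho V + const G * snd V"
| "Vk G V (Suc m) = dd (Vk G V m) + rho V * kvar (Suc m)"

definition Vact :: "real \<Rightarrow> vfield \<Rightarrow> dpoly \<Rightarrow> dpoly" where
  "Vact G V = derivation_of (Vk G V)"

definition TPG :: "vfield set" where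
  "TPG = {(f, g). Poly_Mapping.lookup f 0 = 0 \<and> dd f = kk * g}"

definition DV :: "real \<Rightarrow> vfield \<Rightarrow> vfield \<Rightarrow> vfield" where
  "DV G V W = (Vact G V (fst W) - snd W * phi V, Vact G V (snd W) + fst W * phi V)"

definition bracket :: "real \<Rightarrow> vfield \<Rightarrow> vfield \<Rightarrow> vfield" where
  "bracket G V W = (fst (DV G V W) - fst (DV G W V), snd (DV G V W) - snd (DV G W V))"

definition Phi :: "real \<Rightarrow> vfield \<Rightarrow> dpoly \<Rightarrow> dpoly" where
  "Phi G V = pa (Vact G V kk)"

end

theory Submission
  imports Defs
begin

text \<open>
  A derivation of P is determined by its values on the generators k^(m). Hence each
  \<open>\<partial>\<^sub>a\<close> commutes with the arc-length derivative and \<open>[\<partial>\<^sub>a, \<partial>\<^sub>b] = \<partial>\<^sub>c\<close> with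
  \<open>c = \<partial>\<^sub>a b - \<partial>\<^sub>b a\<close>. A field V in the tangent space has \<open>\<rho>\<^sub>V = 0\<close>, so V(k^(m)) = V(k)^(m),
  i.e. V acts on P exactly as \<open>\<partial>\<^bsub>V(k)\<^esub>\<close>. Linearity of \<open>\<Phi>\<close> is then immediate, and
  compatibility with the brackets reduces to [V,W](k) = V(W(k)) - W(V(k)), a direct
  computation from f' = kg and V(k) = \<open>\<phi>\<^sub>V\<close>' + Gg in which the G-terms cancel.
\<close>

subsection \<open>Formal partial derivatives\<close>

lemma poly_mapping_sum_single_lookup:
  "(\<Sum>m\<in>Poly_Mapping.keys p. Poly_Mapping.single m (Poly_Mapping.lookup p m)) = p"
proof (rule poly_mapping_eqI)
  fix k
  have "Poly_Mapping.lookup (\<Sum>m\<in>Poly_Mapping.keys p. Poly_Mapping.single m (Poly_Mapping.lookup p m)) k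
      = (\<Sum>m\<in>Poly_Mapping.keys p. Poly_Mapping.lookup p m when m = k)"
    by (simp add: lookup_sum lookup_single)
  also have "\<dots> = Poly_Mapping.lookup p k"
    by (cases "k \<in> Poly_Mapping.keys p") (auto simp: when_def sum.delta' in_keys_iff)
  finally show "Poly_Mapping.lookup (\<Sum>m\<in>Poly_Mapping.keys p. Poly_Mapping.single m (Poly_Mapping.lookup p m)) k
      = Poly_Mapping.lookup p k" .
qed

lemma pdv_eq_sum_superset:
  assumes "finite S" "Poly_Mapping.keys p \<subseteq> S"
  shows "pdv i p = (\<Sum>mon\<in>S. Poly_Mapping.single (mon - Poly_Mapping.single i 1)
                     (Poly_Mapping.lookup p mon * of_nat (Poly_Mapping.lookup mon i)))"
  unfolding pdv_def
  by (rule sum.mono_neutral_left) (use assms in \<open>auto simp: in_keys_iff\<close>)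

lemma pdv_zero [simp]: "pdv i 0 = 0"
  by (simp add: pdv_def)

lemma pdv_add: "pdv i (p + q) = pdv i p + pdv i q"
proof -
  let ?S = "Poly_Mapping.keys p \<union> Poly_Mapping.keys q \<union> Poly_Mapping.keys (p + q)"
  have S: "finite ?S" by simp
  show ?thesis
    by (subst (1 2 3) pdv_eq_sum_superset[OF S]) (auto simp: lookup_add distrib_right single_add sum.distrib)
qed

lemma pdv_sum: "pdv i (sum f A) = (\<Sum>a\<in>A. pdv i (f a))"
  by (induction A rule: infinite_finite_induct) (auto simp: pdv_add)

lemma pdv_single:
  "pdv i (Poly_Mapping.single m c)
     = Poly_Mapping.single (m - Poly_Mapping.single i 1) (c * of_nat (Poly_Mapping.lookup m i))"
  by (subst pdv_eq_sum_superset[of "{m}"]) auto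

lemma pdv_single_mult:
  fixes m n :: "nat \<Rightarrow>\<^sub>0 nat" and a b :: real
  defines "x \<equiv> Poly_Mapping.single m a" and "y \<equiv> Poly_Mapping.single n b"
  shows "pdv i (x * y) = pdv i x * y + x * pdv i y"
proof -
  let ?e = "Poly_Mapping.single i (1::nat)" and ?lk = "\<lambda>m. Poly_Mapping.lookup m i"
  have lhs: "pdv i (x * y) = Poly_Mapping.single (m + n - ?e) (a * b * (of_nat (?lk m) + of_nat (?lk n)))"
    by (simp add: x_def y_def mult_single pdv_single lookup_add)
  have shift_left: "m - ?e + n = m + n - ?e" if "?lk m > 0"
    using that by (intro poly_mapping_eqI) (auto simp: lookup_add lookup_minus lookup_single when_def)
  have shift_right: "m + (n - ?e) = m + n - ?e" if "?lk n > 0"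
    using that by (intro poly_mapping_eqI) (auto simp: lookup_add lookup_minus lookup_single when_def)
  show ?thesis
    unfolding lhs x_def y_def pdv_single mult_single
    using shift_left shift_right
    by (cases "?lk m > 0"; cases "?lk n > 0")
       (simp_all add: add.commute[of "m - ?e"] lookup_add algebra_simps flip: single_add)
qed

lemma pdv_mult: "pdv i (p * q) = pdv i p * q + p * pdv i q"
proof -
  let ?mon = "\<lambda>p m. Poly_Mapping.single m (Poly_Mapping.lookup p m)"
  have "pdv i (p * q) = pdv i ((\<Sum>m\<in>Poly_Mapping.keys p. ?mon p m) * (\<Sum>n\<in>Poly_Mapping.keys q. ?mon q n))"
    by (simp only: poly_mapping_sum_single_lookup)
  also have "\<dots> = (\<Sum>m\<in>Poly_Mapping.keys p. \<Sum>n\<in>Poly_Mapping.keys q.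
                     pdv i (?mon p m) * ?mon q n + ?mon p m * pdv i (?mon q n))"
    by (simp add: sum_product pdv_sum pdv_single_mult)
  also have "\<dots> = pdv i (\<Sum>m\<in>Poly_Mapping.keys p. ?mon p m) * (\<Sum>n\<in>Poly_Mapping.keys q. ?mon q n)
                 + (\<Sum>m\<in>Poly_Mapping.keys p. ?mon p m) * pdv i (\<Sum>n\<in>Poly_Mapping.keys q. ?mon q n)"
    by (simp add: sum.distrib sum_product pdv_sum)
  finally show ?thesis
    by (simp only: poly_mapping_sum_single_lookup)
qed

lemma pdv_const [simp]: "pdv i (const c) = 0"
  by (simp add: const_def pdv_single)

lemma pdv_kvar_same: "pdv m (kvar m) = 1"
  by (simp add: kvar_def pdv_single)

lemma finite_vars [simp]: "finite (vars p)"
  by (simp add: vars_def)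

lemma vars_kvar: "vars (kvar m) = {m}"
  by (simp add: vars_def kvar_def)

lemma pdv_eq_0_if_notin_vars: "i \<notin> vars p \<Longrightarrow> pdv i p = 0"
  unfolding pdv_def vars_def
  by (rule sum.neutral) (auto simp: in_keys_iff)

subsection \<open>Derivations of the differential polynomial algebra\<close>

locale dpoly_derivation =
  fixes D :: "dpoly \<Rightarrow> dpoly"
  assumes add: "D (p + q) = D p + D q"
    and mult: "D (p * q) = D p * q + p * D q"
    and const: "D (const c) = 0"
begin

lemma zero: "D 0 = 0"
  using add[of 0 0] by simp

lemma uminus: "D (- p) = - D p"
  using add[of p "- p"] by (simp add: zero eq_neg_iff_add_eq_0 add.commute)

lemma diff: "D (p - q) = D p - D q"
  using add[of p "- q"] by (simp add: uminus)

lemma const_mult: "D (const c * p) = const c * D p"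
  by (simp add: mult const)

lemma funpow_add: "(D ^^ n) (p + q) = (D ^^ n) p + (D ^^ n) q"
  by (induction n) (simp_all add: add)

lemma funpow_diff: "(D ^^ n) (p - q) = (D ^^ n) p - (D ^^ n) q"
  by (induction n) (simp_all add: diff)

lemma funpow_const_mult: "(D ^^ n) (const c * p) = const c * (D ^^ n) p"
  by (induction n) (simp_all add: const_mult)

end

lemma derivation_of_eq_sum_superset:
  assumes "finite S" "vars p \<subseteq> S"
  shows "derivation_of e p = (\<Sum>i\<in>S. e i * pdv i p)"
  unfolding derivation_of_def
  by (rule sum.mono_neutral_left) (use assms in \<open>auto simp: pdv_eq_0_if_notin_vars\<close>)

lemma dpoly_derivation_derivation_of: "dpoly_derivation (derivation_of e)"
proof
  fix p q
  let ?S = "vars p \<union> vars q \<union> vars (p + q) \<union> vars (p * q)"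
  have S: "finite ?S" by simp
  show "derivation_of e (p + q) = derivation_of e p + derivation_of e q"
    by (subst (1 2 3) derivation_of_eq_sum_superset[OF S])
       (auto simp: pdv_add distrib_left sum.distrib)
  show "derivation_of e (p * q) = derivation_of e p * q + p * derivation_of e q"
    by (subst (1 2 3) derivation_of_eq_sum_superset[OF S])
       (auto simp: pdv_mult sum.distrib sum_distrib_left sum_distrib_right algebra_simps)
next
  show "derivation_of e (const c) = 0" for c
    by (simp add: derivation_of_def)
qed

lemma derivation_of_kvar [simp]: "derivation_of e (kvar m) = e m"
  by (simp add: derivation_of_def vars_kvar pdv_kvar_same)

lemma kvar_power: "kvar i ^ n = Poly_Mapping.single (Poly_Mapping.single i n) 1"
proof (induction n)
  case (Suc n)
  have "Poly_Mapping.single i (Suc n) = Poly_Mapping.single i 1 + Poly_Mapping.single i n"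
    by (simp flip: single_add)
  with Suc show ?case
    by (simp add: kvar_def mult_single)
qed simp

lemma prod_single_one:
  "(\<Prod>i\<in>A. Poly_Mapping.single (g i) (1::real)) = Poly_Mapping.single (\<Sum>i\<in>A. g i) 1"
  by (induction A rule: infinite_finite_induct) (auto simp: mult_single)

lemma dpoly_induct [case_names const kvar add mult]:
  assumes const: "\<And>c. P (const c)" and kvar: "\<And>i. P (kvar i)"
    and add: "\<And>p q. P p \<Longrightarrow> P q \<Longrightarrow> P (p + q)"
    and mult: "\<And>p q. P p \<Longrightarrow> P q \<Longrightarrow> P (p * q)"
  shows "P p"
proof -
  have one: "P 1" and zero: "P 0"
    using const[of 1] const[of 0] by (simp_all add: const_def)
  have prod: "P (\<Prod>i\<in>A. f i)" if "\<And>i. i \<in> A \<Longrightarrow> P (f i)" for A and f :: "nat \<Rightarrow> dpoly"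
    using that by (induction A rule: infinite_finite_induct) (auto simp: one mult)
  have sum: "P (\<Sum>i\<in>A. f i)" if "\<And>i. i \<in> A \<Longrightarrow> P (f i)" for A and f :: "(nat \<Rightarrow>\<^sub>0 nat) \<Rightarrow> dpoly"
    using that by (induction A rule: infinite_finite_induct) (auto simp: zero add)
  have power: "P (kvar i ^ n)" for i n
    by (induction n) (auto simp: one kvar mult)
  have monomial: "P (Poly_Mapping.single m c)" for m c
  proof -
    have "Poly_Mapping.single m c = const c * (\<Prod>i\<in>Poly_Mapping.keys m. kvar i ^ Poly_Mapping.lookup m i)"
      by (simp add: kvar_power prod_single_one poly_mapping_sum_single_lookup const_def mult_single)
    then show ?thesis
      using const mult prod power by metis
  qed
  show ?thesis
    by (subst poly_mapping_sum_single_lookup[symmetric]) (rule sum, rule monomial)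
qed

lemma dpoly_derivation_eq_0:
  assumes "dpoly_derivation D" "\<And>i. D (kvar i) = 0"
  shows "D p = 0"
  using assms by (induction p rule: dpoly_induct)
    (simp_all add: dpoly_derivation.add dpoly_derivation.mult dpoly_derivation.const)

lemma dpoly_derivation_diff:
  "dpoly_derivation D\<^sub>1 \<Longrightarrow> dpoly_derivation D\<^sub>2 \<Longrightarrow> dpoly_derivation (\<lambda>p. D\<^sub>1 p - D\<^sub>2 p)"
  unfolding dpoly_derivation_def by (auto simp: algebra_simps)

lemma dpoly_derivation_commutator:
  assumes "dpoly_derivation D\<^sub>1" "dpoly_derivation D\<^sub>2"
  shows "dpoly_derivation (\<lambda>p. D\<^sub>1 (D\<^sub>2 p) - D\<^sub>2 (D\<^sub>1 p))"
proof -
  interpret D\<^sub>1: dpoly_derivation D\<^sub>1 by fact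
  interpret D\<^sub>2: dpoly_derivation D\<^sub>2 by fact
  show ?thesis
    by unfold_locales
      (simp_all add: D\<^sub>1.add D\<^sub>1.mult D\<^sub>1.diff D\<^sub>1.const D\<^sub>1.zero
                     D\<^sub>2.add D\<^sub>2.mult D\<^sub>2.diff D\<^sub>2.const D\<^sub>2.zero algebra_simps)
qed

lemma dpoly_derivation_eqI:
  assumes "dpoly_derivation D\<^sub>1" "dpoly_derivation D\<^sub>2" "\<And>i. D\<^sub>1 (kvar i) = D\<^sub>2 (kvar i)"
  shows "D\<^sub>1 p = D\<^sub>2 p"
  using dpoly_derivation_eq_0[OF dpoly_derivation_diff[OF assms(1,2)]] assms(3) by simp

subsection \<open>The derivations \<open>\<partial>\<^sub>a\<close>\<close>

interpretation dd: dpoly_derivation dd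
  unfolding dd_def by (rule dpoly_derivation_derivation_of)

interpretation pa: dpoly_derivation "pa a" for a
  unfolding pa_def by (rule dpoly_derivation_derivation_of)

lemma dd_kvar [simp]: "dd (kvar i) = kvar (Suc i)"
  by (simp add: dd_def)

lemma pa_kvar [simp]: "pa a (kvar i) = (dd ^^ i) a"
  by (simp add: pa_def)

lemma pa_dd_commute: "pa a (dd p) = dd (pa a p)"
  using dpoly_derivation_eq_0[OF dpoly_derivation_commutator[OF pa.dpoly_derivation_axioms
                                                               dd.dpoly_derivation_axioms]]
  by simp

lemma pa_funpow_dd: "pa a ((dd ^^ m) b) = (dd ^^ m) (pa a b)"
  by (induction m) (simp_all add: pa_dd_commute)

lemma pa_commutator: "pa a (pa b p) - pa b (pa a p) = pa (pa a b - pa b a) p"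
  by (rule dpoly_derivation_eqI[OF dpoly_derivation_commutator[OF pa.dpoly_derivation_axioms
                                                                  pa.dpoly_derivation_axioms]
                                   pa.dpoly_derivation_axioms])
     (simp add: pa_funpow_dd dd.funpow_diff)

lemma pa_add: "pa (a + b) p = pa a p + pa b p"
  by (simp add: pa_def derivation_of_def dd.funpow_add distrib_right sum.distrib)

lemma pa_const_mult: "pa (const c * a) p = const c * pa a p"
  by (simp add: pa_def derivation_of_def dd.funpow_const_mult sum_distrib_left mult.assoc)

subsection \<open>Vector fields along the curve\<close>

interpretation Vact: dpoly_derivation "Vact G V" for G V
  unfolding Vact_def by (rule dpoly_derivation_derivation_of)

lemma Vact_kk [simp]: "Vact G V kk = Vk G V 0"
  by (simp add: Vact_def kk_def)

lemma Phi_eq_pa_Vk: "Phi G V = pa (Vk G V 0)"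
  by (simp add: Phi_def)

lemma rho_eq_0_if_TPG: "V \<in> TPG \<Longrightarrow> rho V = 0"
  by (auto simp: TPG_def rho_def)

lemma Vk_zero_if_TPG: "V \<in> TPG \<Longrightarrow> Vk G V 0 = dd (phi V) + const G * snd V"
  by (simp add: rho_eq_0_if_TPG)

lemma Vact_eq_pa_if_TPG:
  assumes "V \<in> TPG"
  shows "Vact G V = pa (Vk G V 0)"
proof -
  have "Vk G V m = (dd ^^ m) (Vk G V 0)" for m
    using rho_eq_0_if_TPG[OF assms] by (induction m) simp_all
  then have "Vk G V = (\<lambda>m. (dd ^^ m) (Vk G V 0))" ..
  then show ?thesis
    unfolding Vact_def pa_def by simp
qed

lemma Vact_dd_commute: "V \<in> TPG \<Longrightarrow> Vact G V (dd p) = dd (Vact G V p)"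
  by (simp add: Vact_eq_pa_if_TPG pa_dd_commute)

lemma Vk_zero_add: "Vk G (fst V + fst W, snd V + snd W) 0 = Vk G V 0 + Vk G W 0"
  by (simp add: phi_def rho_def dd.add algebra_simps)

lemma Vk_zero_const_mult: "Vk G (const c * fst V, const c * snd V) 0 = const c * Vk G V 0"
  by (simp add: phi_def rho_def dd.add dd.diff dd.mult dd.const algebra_simps)

lemma rho_bracket:
  assumes V: "(f\<^sub>1, g\<^sub>1) \<in> TPG" and W: "(f\<^sub>2, g\<^sub>2) \<in> TPG"
  shows "rho (bracket G (f\<^sub>1, g\<^sub>1) (f\<^sub>2, g\<^sub>2)) = 0"
proof -
  have "dd f\<^sub>1 = kk * g\<^sub>1" "dd f\<^sub>2 = kk * g\<^sub>2"
    using V W by (simp_all add: TPG_def)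
  then show ?thesis
    unfolding rho_def bracket_def DV_def
    by (simp add: dd.add dd.diff dd.mult Vact.add Vact.mult
          Vact_dd_commute[OF V, symmetric] Vact_dd_commute[OF W, symmetric]
          rho_eq_0_if_TPG[OF V] rho_eq_0_if_TPG[OF W] phi_def algebra_simps)
qed

lemma phi_bracket:
  assumes V: "(f\<^sub>1, g\<^sub>1) \<in> TPG" and W: "(f\<^sub>2, g\<^sub>2) \<in> TPG"
  shows "phi (bracket G (f\<^sub>1, g\<^sub>1) (f\<^sub>2, g\<^sub>2))
           = Vact G (f\<^sub>1, g\<^sub>1) (phi (f\<^sub>2, g\<^sub>2)) - Vact G (f\<^sub>2, g\<^sub>2) (phi (f\<^sub>1, g\<^sub>1))
             + const G * (g\<^sub>2 * f\<^sub>1 - g\<^sub>1 * f\<^sub>2)"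
proof -
  have "dd f\<^sub>1 = kk * g\<^sub>1" "dd f\<^sub>2 = kk * g\<^sub>2"
    using V W by (simp_all add: TPG_def)
  then show ?thesis
    unfolding bracket_def DV_def
    by (simp add: dd.add dd.diff dd.mult Vact.add Vact.mult
          Vact_dd_commute[OF V, symmetric] Vact_dd_commute[OF W, symmetric]
          rho_eq_0_if_TPG[OF V] rho_eq_0_if_TPG[OF W] phi_def algebra_simps)
qed

lemma Vk_bracket:
  assumes V: "V \<in> TPG" and W: "W \<in> TPG"
  shows "Vk G (bracket G V W) 0 = Vact G V (Vk G W 0) - Vact G W (Vk G V 0)"
proof -
  obtain f\<^sub>1 g\<^sub>1 f\<^sub>2 g\<^sub>2 where pairs: "V = (f\<^sub>1, g\<^sub>1)" "W = (f\<^sub>2, g\<^sub>2)" by force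
  with V W have V': "(f\<^sub>1, g\<^sub>1) \<in> TPG" and W': "(f\<^sub>2, g\<^sub>2) \<in> TPG" by simp_all
  then have "dd f\<^sub>1 = kk * g\<^sub>1" "dd f\<^sub>2 = kk * g\<^sub>2"
    by (simp_all add: TPG_def)
  then have G_terms_cancel: "dd (g\<^sub>2 * f\<^sub>1 - g\<^sub>1 * f\<^sub>2) + (f\<^sub>2 * phi V - f\<^sub>1 * phi W) = 0"
    by (simp add: pairs phi_def dd.diff dd.mult algebra_simps)
  have "Vk G (bracket G V W) 0 = dd (phi (bracket G V W)) + const G * snd (bracket G V W)"
    using rho_bracket[OF V' W'] by (simp add: pairs)
  also have "\<dots> = dd (Vact G V (phi W) - Vact G W (phi V)) + const G * (Vact G V g\<^sub>2 - Vact G W g\<^sub>1)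
                   + const G * (dd (g\<^sub>2 * f\<^sub>1 - g\<^sub>1 * f\<^sub>2) + (f\<^sub>2 * phi V - f\<^sub>1 * phi W))"
    unfolding pairs phi_bracket[OF V' W']
    by (simp add: bracket_def DV_def dd.add dd.diff dd.const_mult) (simp add: algebra_simps)
  also have "\<dots> = Vact G V (dd (phi W) + const G * g\<^sub>2) - Vact G W (dd (phi V) + const G * g\<^sub>1)"
    by (simp only: G_terms_cancel)
       (simp add: Vact.add Vact.mult Vact.const Vact_dd_commute[OF V] Vact_dd_commute[OF W] dd.diff algebra_simps)
  also have "\<dots> = Vact G V (Vk G W 0) - Vact G W (Vk G V 0)"
    by (simp only: pairs Vk_zero_if_TPG[OF V'] Vk_zero_if_TPG[OF W'] snd_conv)
  finally show ?thesis .
qed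

theorem proposition4p2:
  fixes G :: real
  shows "(\<forall>V\<in>TPG. \<forall>W\<in>TPG.
            Phi G (fst V + fst W, snd V + snd W) = (\<lambda>p. Phi G V p + Phi G W p))
       \<and> (\<forall>V\<in>TPG. \<forall>c::real.
            Phi G (const c * fst V, const c * snd V) = (\<lambda>p. const c * Phi G V p))
       \<and> (\<forall>V\<in>TPG. \<forall>W\<in>TPG.
            Phi G (bracket G V W) = (\<lambda>p. Phi G V (Phi G W p) - Phi G W (Phi G V p)))"
proof (intro conjI ballI allI ext)
  fix V W p assume V: "V \<in> TPG" and W: "W \<in> TPG"
  show "Phi G (fst V + fst W, snd V + snd W) p = Phi G V p + Phi G W p"
    by (simp only: Phi_eq_pa_Vk Vk_zero_add pa_add)
  have "Phi G (bracket G V W) p = pa (pa (Vk G V 0) (Vk G W 0) - pa (Vk G W 0) (Vk G V 0)) p"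
    by (simp only: Phi_eq_pa_Vk Vk_bracket[OF V W] Vact_eq_pa_if_TPG[OF V] Vact_eq_pa_if_TPG[OF W])
  also have "\<dots> = Phi G V (Phi G W p) - Phi G W (Phi G V p)"
    by (simp only: Phi_eq_pa_Vk pa_commutator)
  finally show "Phi G (bracket G V W) p = Phi G V (Phi G W p) - Phi G W (Phi G V p)" .
next
  fix V c p
  show "Phi G (const c * fst V, const c * snd V) p = const c * Phi G V p"
    by (simp only: Phi_eq_pa_Vk Vk_zero_const_mult pa_const_mult)
qed

end
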